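(* Let $\mu$ be a distribution over $\{0,1\}^V$ and $\theta\in(0,1)$. The Markov chains $P_{\pi\text{-GD}}$, $P_{\mathrm{cl}}$ and $P_{\mathrm{s\text{-}GD}}$ are all reversible with respect to $\pi$.
   Context: Tilted $(\theta*\mu)(\sigma)\propto\mu(\sigma)\theta^{\|\sigma\|_1}$. $\mathsf{lift}:\{0,1\}^V\to\{0,1,\star\}^V$ random: independently per coordinate $0\mapsto0$, $1\mapsto\star$ w.p. $1-\theta$, $1\mapsto1$ w.p. $\theta$; $\mathsf{contr}$: $0\mapsto0$, $1,\star\mapsto1$. $\pi$: law of $\mathsf{lift}(X)$, $X\sim\mu$, support $\Omega(\pi)$. $P_{\pi\text{-GD}}$: pick $v$ uniformly, resample $X_v$ from $\pi$ given $X_{V\setminus\{v\}}$. $P_{\mathrm{cl}}$: $X\mapsto\mathsf{lift}(\mathsf{contr}(X))$. $P_{\mathrm{s\text{-}GD}}$: pick $v$ uniformly; if $X_v=\star$ keep; otherwise resample $X_v\in\{0,1\}$ from $(\theta*\mu)_v^{\sigma_{V\setminus\{v\}}}$, $\sigma=\mathsf{contr}(X)$. Reversible w.r.t. $\pi$: $\pi(\sigma)P(\sigma,\tau)=\pi(\tau)P(\tau,\sigma)$ for all $\sigma,\tau\in\Omega(\pi)$. *)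

theory Defs
  imports Complex_Main
begin

text \<open>Configurations in {0,1}^V are 'v \<Rightarrow> bool
  (True = 1); configurations in {0,1,star}^V are 'v \<Rightarrow> spin.\<close>

datatype spin = Zero | One | Star

lemma UNIV_spin: "(UNIV :: spin set) = {Zero, One, Star}"
  using spin.exhaust by auto

instance spin :: finite
  by standard (simp add: UNIV_spin)

definition is_distribution :: "('a::finite \<Rightarrow> real) \<Rightarrow> bool" where
  "is_distribution p \<longleftrightarrow> (\<forall>x. 0 \<le> p x) \<and> (\<Sum>x\<in>UNIV. p x) = 1"

definition weight :: "('v::finite \<Rightarrow> bool) \<Rightarrow> nat" where
  "weight \<sigma> = card {v. \<sigma> v}"

definition tilt :: "real \<Rightarrow> (('v::finite \<Rightarrow> bool) \<Rightarrow> real) \<Rightarrow> ('v \<Rightarrow> bool) \<Rightarrow> real" where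
  "tilt \<theta> \<mu> \<sigma> = \<mu> \<sigma> * \<theta> ^ weight \<sigma> / (\<Sum>\<tau>\<in>UNIV. \<mu> \<tau> * \<theta> ^ weight \<tau>)"

definition cond_marg :: "(('v \<Rightarrow> 'a::finite) \<Rightarrow> real) \<Rightarrow> 'v \<Rightarrow> ('v \<Rightarrow> 'a) \<Rightarrow> 'a \<Rightarrow> real" where
  "cond_marg \<nu> v x a = \<nu> (x(v := a)) / (\<Sum>c\<in>UNIV. \<nu> (x(v := c)))"

definition contr :: "('v \<Rightarrow> spin) \<Rightarrow> ('v \<Rightarrow> bool)" where
  "contr X = (\<lambda>v. X v \<noteq> Zero)"

definition lift_coord :: "real \<Rightarrow> bool \<Rightarrow> spin \<Rightarrow> real" where
  "lift_coord \<theta> b s = (case (b, s) of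
      (False, Zero) \<Rightarrow> 1
    | (True, Star) \<Rightarrow> 1 - \<theta>
    | (True, One) \<Rightarrow> \<theta>
    | _ \<Rightarrow> 0)"

definition lift_kernel :: "real \<Rightarrow> ('v::finite \<Rightarrow> bool) \<Rightarrow> ('v \<Rightarrow> spin) \<Rightarrow> real" where
  "lift_kernel \<theta> \<sigma> X = (\<Prod>v\<in>UNIV. lift_coord \<theta> (\<sigma> v) (X v))"

definition pi_dist :: "real \<Rightarrow> (('v::finite \<Rightarrow> bool) \<Rightarrow> real) \<Rightarrow> ('v \<Rightarrow> spin) \<Rightarrow> real" where
  "pi_dist \<theta> \<mu> X = (\<Sum>\<sigma>\<in>UNIV. \<mu> \<sigma> * lift_kernel \<theta> \<sigma> X)"

definition support :: "('a \<Rightarrow> real) \<Rightarrow> 'a set" where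
  "support p = {x. p x > 0}"

definition P_piGD :: "real \<Rightarrow> (('v::finite \<Rightarrow> bool) \<Rightarrow> real) \<Rightarrow> ('v \<Rightarrow> spin) \<Rightarrow> ('v \<Rightarrow> spin) \<Rightarrow> real" where
  "P_piGD \<theta> \<mu> X Y = (\<Sum>v\<in>UNIV. (1 / real (card (UNIV :: 'v set))) *
      (if (\<forall>u. u \<noteq> v \<longrightarrow> Y u = X u)
       then cond_marg (pi_dist \<theta> \<mu>) v X (Y v) else 0))"

definition P_cl :: "real \<Rightarrow> ('v::finite \<Rightarrow> spin) \<Rightarrow> ('v \<Rightarrow> spin) \<Rightarrow> real" where
  "P_cl \<theta> X Y = lift_kernel \<theta> (contr X) Y"

definition P_sGD :: "real \<Rightarrow> (('v::finite \<Rightarrow> bool) \<Rightarrow> real) \<Rightarrow> ('v \<Rightarrow> spin) \<Rightarrow> ('v \<Rightarrow> spin) \<Rightarrow> real" where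
  "P_sGD \<theta> \<mu> X Y = (\<Sum>v\<in>UNIV. (1 / real (card (UNIV :: 'v set))) *
      (if X v = Star then (if Y = X then 1 else 0)
       else if (\<forall>u. u \<noteq> v \<longrightarrow> Y u = X u) \<and> Y v \<noteq> Star
       then cond_marg (tilt \<theta> \<mu>) v (contr X) (Y v = One) else 0))"

definition reversible :: "('a \<Rightarrow> real) \<Rightarrow> ('a \<Rightarrow> 'a \<Rightarrow> real) \<Rightarrow> bool" where
  "reversible p P \<longleftrightarrow> (\<forall>\<sigma>\<in>support p. \<forall>\<tau>\<in>support p. p \<sigma> * P \<sigma> \<tau> = p \<tau> * P \<tau> \<sigma>)"

end

theory Submission
  imports Defs
begin

text \<open>Since lift never changes the contraction, \<pi>(X) = \<mu>(contr X) \<cdot> lift(contr X \<rightarrow> X), so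
  P_cl only moves within a fibre of contr, on which \<pi> is proportional to the lift kernel.
  Heat-bath updates are reversible for the law they resample from, and a uniform random
  choice of site preserves this. For the star-frozen dynamics, \<pi>(X) / (\<theta>*\<mu>)(contr X)
  equals, up to a constant, ((1 - \<theta>)/\<theta>) to the number of stars of X, and the update never
  changes the stars. None of this needs \<mu> to be a distribution or 0 < \<theta> < 1.\<close>

lemma reversibleI:
  assumes "\<And>x y. p x * P x y = p y * P y x"
  shows "reversible p P"
  using assms unfolding reversible_def by blast

lemma reversible_random_scan:
  fixes K :: "'v \<Rightarrow> 'a \<Rightarrow> 'a \<Rightarrow> real"
  assumes "\<And>v x y. p x * K v x y = p y * K v y x"
  shows "reversible p (\<lambda>x y. \<Sum>v\<in>UNIV. c * K v x y)"
proof (rule reversibleI)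
  fix x y
  have "p x * (c * K v x y) = p y * (c * K v y x)" for v
    using assms[of x v y] by (simp add: ac_simps)
  then show "p x * (\<Sum>v\<in>UNIV. c * K v x y) = p y * (\<Sum>v\<in>UNIV. c * K v y x)"
    unfolding sum_distrib_left by (rule sum.cong[OF refl])
qed

definition heat_bath_site :: "(('v \<Rightarrow> 'a::finite) \<Rightarrow> real) \<Rightarrow> 'v \<Rightarrow> ('v \<Rightarrow> 'a) \<Rightarrow> ('v \<Rightarrow> 'a) \<Rightarrow> real"
  where "heat_bath_site \<nu> v X Y =
    (if \<forall>u. u \<noteq> v \<longrightarrow> Y u = X u then cond_marg \<nu> v X (Y v) else 0)"

lemma cond_marg_agree_off_site:
  assumes "\<forall>u. u \<noteq> v \<longrightarrow> X u = Y u"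
  shows "cond_marg \<nu> v X (Y v) = \<nu> Y / (\<Sum>c\<in>UNIV. \<nu> (Y(v := c)))"
proof -
  have "X(v := c) = Y(v := c)" for c
    using assms by auto
  moreover have "Y(v := Y v) = Y"
    by simp
  ultimately show ?thesis
    unfolding cond_marg_def by simp
qed

lemma cond_marg_balance:
  assumes "\<forall>u. u \<noteq> v \<longrightarrow> X u = Y u"
  shows "\<nu> X * cond_marg \<nu> v X (Y v) = \<nu> Y * cond_marg \<nu> v Y (X v)"
proof -
  have "Y(v := c) = X(v := c)" for c
    using assms by auto
  then show ?thesis
    using assms by (simp add: cond_marg_agree_off_site)
qed

lemma heat_bath_site_balance:
  "\<nu> X * heat_bath_site \<nu> v X Y = \<nu> Y * heat_bath_site \<nu> v Y X"
proof (cases "\<forall>u. u \<noteq> v \<longrightarrow> X u = Y u")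
  case True
  then have "\<forall>u. u \<noteq> v \<longrightarrow> Y u = X u"
    by simp
  with True show ?thesis
    unfolding heat_bath_site_def by (simp add: cond_marg_balance)
next
  case False
  then have "heat_bath_site \<nu> v X Y = 0" "heat_bath_site \<nu> v Y X = 0"
    unfolding heat_bath_site_def by (auto simp: eq_commute[of "Y _"])
  then show ?thesis
    by simp
qed

lemma P_piGD_random_scan:
  fixes \<mu> :: "('v::finite \<Rightarrow> bool) \<Rightarrow> real"
  shows "P_piGD \<theta> \<mu> =
    (\<lambda>X Y. \<Sum>v\<in>UNIV. 1 / real (card (UNIV :: 'v set)) * heat_bath_site (pi_dist \<theta> \<mu>) v X Y)"
  unfolding P_piGD_def heat_bath_site_def by simp

lemma reversible_P_piGD: "reversible (pi_dist \<theta> \<mu>) (P_piGD \<theta> \<mu>)"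
  unfolding P_piGD_random_scan
  by (rule reversible_random_scan) (rule heat_bath_site_balance)

lemma lift_kernel_eq_0:
  assumes "\<sigma> \<noteq> contr X"
  shows "lift_kernel \<theta> \<sigma> X = 0"
proof -
  from assms obtain v where "\<sigma> v \<noteq> contr X v"
    by auto
  then have "lift_coord \<theta> (\<sigma> v) (X v) = 0"
    by (cases "X v"; cases "\<sigma> v"; simp add: contr_def lift_coord_def)
  then show ?thesis
    unfolding lift_kernel_def by (meson UNIV_I finite_UNIV prod_zero)
qed

lemma pi_dist_eq_lift_contr: "pi_dist \<theta> \<mu> X = \<mu> (contr X) * lift_kernel \<theta> (contr X) X"
proof -
  have "pi_dist \<theta> \<mu> X = (\<Sum>\<sigma>\<in>UNIV. if \<sigma> = contr X then \<mu> \<sigma> * lift_kernel \<theta> \<sigma> X else 0)"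
    unfolding pi_dist_def by (rule sum.cong) (auto simp: lift_kernel_eq_0)
  also have "\<dots> = \<mu> (contr X) * lift_kernel \<theta> (contr X) X"
    by simp
  finally show ?thesis .
qed

lemma reversible_P_cl: "reversible (pi_dist \<theta> \<mu>) (P_cl \<theta>)"
proof (rule reversibleI)
  fix X Y
  show "pi_dist \<theta> \<mu> X * P_cl \<theta> X Y = pi_dist \<theta> \<mu> Y * P_cl \<theta> Y X"
  proof (cases "contr X = contr Y")
    case True
    then show ?thesis
      unfolding P_cl_def pi_dist_eq_lift_contr by (simp only: ac_simps)
  next
    case False
    then show ?thesis
      unfolding P_cl_def by (simp add: lift_kernel_eq_0 eq_commute[of "contr Y"])
  qed
qed

lemma power_weight: "(\<theta>::real) ^ weight \<sigma> = (\<Prod>u\<in>UNIV. if \<sigma> u then \<theta> else 1)"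
  unfolding weight_def by (simp add: prod.If_cases Collect_conv_if)

lemma lift_kernel_power_weight_swap:
  fixes X Y :: "'v::finite \<Rightarrow> spin"
  assumes "\<And>u. X u = Star \<longleftrightarrow> Y u = Star"
  shows "lift_kernel \<theta> (contr X) X * \<theta> ^ weight (contr Y)
       = lift_kernel \<theta> (contr Y) Y * \<theta> ^ weight (contr X)"
proof -
  define h where "h a b = lift_coord \<theta> (a \<noteq> Zero) a * (if b \<noteq> Zero then \<theta> else 1)" for a b
  have factor: "lift_kernel \<theta> (contr X') X' * \<theta> ^ weight (contr Y') = (\<Prod>u\<in>UNIV. h (X' u) (Y' u))"
    for X' Y' :: "'v \<Rightarrow> spin"
    unfolding lift_kernel_def power_weight h_def prod.distrib[symmetric] contr_def by simp
  have "h (X u) (Y u) = h (Y u) (X u)" for u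
    using assms[of u] by (cases "X u"; cases "Y u"; simp add: h_def lift_coord_def)
  then show ?thesis
    unfolding factor by simp
qed

lemma pi_dist_tilt_swap:
  fixes X Y :: "'v::finite \<Rightarrow> spin"
  assumes "\<And>u. X u = Star \<longleftrightarrow> Y u = Star"
  shows "pi_dist \<theta> \<mu> X * tilt \<theta> \<mu> (contr Y) = pi_dist \<theta> \<mu> Y * tilt \<theta> \<mu> (contr X)"
proof -
  define T where "T = (\<Sum>\<tau>\<in>UNIV. \<mu> \<tau> * \<theta> ^ weight \<tau>)"
  have "pi_dist \<theta> \<mu> X * tilt \<theta> \<mu> (contr Y)
      = \<mu> (contr X) * \<mu> (contr Y) / T * (lift_kernel \<theta> (contr X) X * \<theta> ^ weight (contr Y))"
    unfolding pi_dist_eq_lift_contr tilt_def T_def[symmetric] by simp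
  also have "\<dots> = \<mu> (contr X) * \<mu> (contr Y) / T * (lift_kernel \<theta> (contr Y) Y * \<theta> ^ weight (contr X))"
    using lift_kernel_power_weight_swap assms by metis
  also have "\<dots> = pi_dist \<theta> \<mu> Y * tilt \<theta> \<mu> (contr X)"
    unfolding pi_dist_eq_lift_contr tilt_def T_def[symmetric] by simp
  finally show ?thesis .
qed

definition sGD_site :: "real \<Rightarrow> (('v::finite \<Rightarrow> bool) \<Rightarrow> real) \<Rightarrow> 'v \<Rightarrow> ('v \<Rightarrow> spin) \<Rightarrow> ('v \<Rightarrow> spin) \<Rightarrow> real"
  where "sGD_site \<theta> \<mu> v X Y =
    (if X v = Star then (if Y = X then 1 else 0)
     else if (\<forall>u. u \<noteq> v \<longrightarrow> Y u = X u) \<and> Y v \<noteq> Star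
     then cond_marg (tilt \<theta> \<mu>) v (contr X) (Y v = One) else 0)"

lemma sGD_site_update_balance:
  assumes agree: "\<forall>u. u \<noteq> v \<longrightarrow> X u = Y u" and "X v \<noteq> Star" and "Y v \<noteq> Star"
  shows "pi_dist \<theta> \<mu> X * cond_marg (tilt \<theta> \<mu>) v (contr X) (Y v = One)
       = pi_dist \<theta> \<mu> Y * cond_marg (tilt \<theta> \<mu>) v (contr Y) (X v = One)"
proof -
  let ?Z = "\<lambda>\<sigma>. \<Sum>c\<in>UNIV. tilt \<theta> \<mu> (\<sigma>(v := c))"
  have contr_agree: "\<forall>u. u \<noteq> v \<longrightarrow> contr X u = contr Y u"
    using agree by (simp add: contr_def)
  then have "(contr X)(v := c) = (contr Y)(v := c)" for c
    by (auto simp: fun_eq_iff)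
  then have same_normaliser: "?Z (contr X) = ?Z (contr Y)"
    by simp
  have contr_at_v: "(X v = One) = contr X v" "(Y v = One) = contr Y v"
    using assms(2,3) by (cases "X v"; cases "Y v"; simp add: contr_def)+
  have "cond_marg (tilt \<theta> \<mu>) v (contr X) (Y v = One) = tilt \<theta> \<mu> (contr Y) / ?Z (contr Y)"
    and "cond_marg (tilt \<theta> \<mu>) v (contr Y) (X v = One) = tilt \<theta> \<mu> (contr X) / ?Z (contr X)"
    using contr_agree unfolding contr_at_v by (simp_all add: cond_marg_agree_off_site)
  moreover have "\<And>u. X u = Star \<longleftrightarrow> Y u = Star"
    using assms by metis
  ultimately show ?thesis
    using same_normaliser by (simp add: pi_dist_tilt_swap)
qed

lemma sGD_site_balance:
  "pi_dist \<theta> \<mu> X * sGD_site \<theta> \<mu> v X Y = pi_dist \<theta> \<mu> Y * sGD_site \<theta> \<mu> v Y X"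
proof (cases "X v = Star \<or> Y v = Star \<or> \<not> (\<forall>u. u \<noteq> v \<longrightarrow> X u = Y u)")
  case True
  then show ?thesis
    unfolding sGD_site_def by (cases "X = Y") (auto simp: eq_commute[of "Y _"])
next
  case False
  then have "\<forall>u. u \<noteq> v \<longrightarrow> X u = Y u" "\<forall>u. u \<noteq> v \<longrightarrow> Y u = X u"
    and "X v \<noteq> Star" "Y v \<noteq> Star"
    by auto
  then show ?thesis
    unfolding sGD_site_def by (simp add: sGD_site_update_balance)
qed

lemma P_sGD_random_scan:
  fixes \<mu> :: "('v::finite \<Rightarrow> bool) \<Rightarrow> real"
  shows "P_sGD \<theta> \<mu> = (\<lambda>X Y. \<Sum>v\<in>UNIV. 1 / real (card (UNIV :: 'v set)) * sGD_site \<theta> \<mu> v X Y)"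
  unfolding P_sGD_def sGD_site_def by simp

lemma reversible_P_sGD: "reversible (pi_dist \<theta> \<mu>) (P_sGD \<theta> \<mu>)"
  unfolding P_sGD_random_scan
  by (rule reversible_random_scan) (rule sGD_site_balance)

theorem lemma5p5:
  fixes \<mu> :: "('v::finite \<Rightarrow> bool) \<Rightarrow> real" and \<theta> :: real
  assumes "is_distribution \<mu>" and "0 < \<theta>" and "\<theta> < 1"
  shows "reversible (pi_dist \<theta> \<mu>) (P_piGD \<theta> \<mu>)
    \<and> reversible (pi_dist \<theta> \<mu>) (P_cl \<theta>)
    \<and> reversible (pi_dist \<theta> \<mu>) (P_sGD \<theta> \<mu>)"
  using reversible_P_piGD reversible_P_cl reversible_P_sGD by blast

end
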